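(* Let $\gamma>0$, $b>0$, $c>0$, $u_{1max}>0$, $u_{2max}>0$, $i_0\in[0,1]$, and let $\beta$ be a bounded nonnegative (measurable) function of time. For a deadline $T>0$, consider minimizing $J(u_1,u_2)=-1+s(T)+\int_0^T (b u_1^2(t)+c u_2^2(t))\,dt$ over Lebesgue integrable $u_1,u_2$ with $0\le u_1(t)\le u_{1max}$, $0\le u_2(t)\le u_{2max}$, subject to $$\dot s = -(\beta+u_2)\, s(1-s-r) - u_1 s,\qquad \dot r=\gamma(1-s-r),\qquad s(0)=1-i_0,\ r(0)=0,\ 0\le s,r\le 1.$$ The optimality system (from Pontryagin's Maximum Principle) consists of these state equations together with the adjoint equations $$\dot\lambda_s = \beta\lambda_s - 2\beta\lambda_s s - \beta\lambda_s r + \lambda_s u_1 + \lambda_s u_2 - 2\lambda_s u_2 s - \lambda_s u_2 r + \gamma\lambda_r,$$ $$\dot\lambda_r = -\beta\lambda_s s + \lambda_s u_2 s + \gamma\lambda_r,$$ with $\lambda_s(T)=-1$, $\lambda_r(T)=0$, and the control characterizations $$u_1=\min\Big\{\max\Big\{\tfrac{\lambda_s s}{-2b},0\Big\},u_{1max}\Big\},\qquad u_2=\min\Big\{\max\Big\{\tfrac{\lambda_s s(1-2s-r)}{-2c},0\Big\},u_{2max}\Big\}$$ (all quantities evaluated at time $t$). Then for a sufficiently small campaign deadline $T$, the state and adjoint trajectories $(s,r,\lambda_s,\lambda_r)$ at the optimum (i.e. the solution of this optimality system) and the optimal controls $(u_1,u_2)$ are unique.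
   Context: Controlled SIR information epidemic: $s,r$ are the fractions of susceptible and recovered individuals (infected fraction $1-s-r$), $\beta(t)$ the effective spreading rate, $\gamma$ the recovery rate, $u_1$ the direct recruitment control, $u_2$ the word-of-mouth control, and $\lambda_s,\lambda_r$ the adjoint variables. *)

theory Defs
  imports "HOL-Analysis.Analysis"
begin

definition s_rhs :: "(real \<Rightarrow> real) \<Rightarrow> real \<Rightarrow> real \<Rightarrow> real \<Rightarrow> real \<Rightarrow> real \<Rightarrow> real" where
  "s_rhs \<beta> t s r u1 u2 = - (\<beta> t + u2) * s * (1 - s - r) - u1 * s"

definition r_rhs :: "real \<Rightarrow> real \<Rightarrow> real \<Rightarrow> real" where
  "r_rhs \<gamma> s r = \<gamma> * (1 - s - r)"

definition ls_rhs :: "(real \<Rightarrow> real) \<Rightarrow> real \<Rightarrow> real \<Rightarrow> real \<Rightarrow> real \<Rightarrow> real \<Rightarrow> real \<Rightarrow> real \<Rightarrow> real \<Rightarrow> real" where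
  "ls_rhs \<beta> \<gamma> t s r ls lr u1 u2 =
     \<beta> t * ls - 2 * \<beta> t * ls * s - \<beta> t * ls * r + ls * u1 + ls * u2
     - 2 * ls * u2 * s - ls * u2 * r + \<gamma> * lr"

definition lr_rhs :: "(real \<Rightarrow> real) \<Rightarrow> real \<Rightarrow> real \<Rightarrow> real \<Rightarrow> real \<Rightarrow> real \<Rightarrow> real \<Rightarrow> real" where
  "lr_rhs \<beta> \<gamma> t s ls lr u2 = - \<beta> t * ls * s + ls * u2 * s + \<gamma> * lr"

text \<open>Since \<beta> is only measurable, the ODEs are
  understood in the Caratheodory sense, i.e. as integral equations with integrable
  right-hand sides (state equations integrated from 0, adjoint equations from T).\<close>

definition optimality_system ::
  "(real \<Rightarrow> real) \<Rightarrow> real \<Rightarrow> real \<Rightarrow> real \<Rightarrow> real \<Rightarrow> real \<Rightarrow> real \<Rightarrow> real \<Rightarrow>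
   (real \<Rightarrow> real) \<Rightarrow> (real \<Rightarrow> real) \<Rightarrow> (real \<Rightarrow> real) \<Rightarrow> (real \<Rightarrow> real) \<Rightarrow>
   (real \<Rightarrow> real) \<Rightarrow> (real \<Rightarrow> real) \<Rightarrow> bool" where
  "optimality_system \<beta> \<gamma> b c u1max u2max i0 T s r ls lr u1 u2 \<longleftrightarrow>
     (\<forall>t\<in>{0..T}. 0 \<le> s t \<and> s t \<le> 1 \<and> 0 \<le> r t \<and> r t \<le> 1) \<and>
     (\<forall>t\<in>{0..T}. u1 t = min (max (ls t * s t / (- 2 * b)) 0) u1max) \<and>
     (\<forall>t\<in>{0..T}. u2 t = min (max (ls t * s t * (1 - 2 * s t - r t) / (- 2 * c)) 0) u2max) \<and>
     set_integrable lborel {0..T} (\<lambda>\<tau>. s_rhs \<beta> \<tau> (s \<tau>) (r \<tau>) (u1 \<tau>) (u2 \<tau>)) \<and>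
     set_integrable lborel {0..T} (\<lambda>\<tau>. r_rhs \<gamma> (s \<tau>) (r \<tau>)) \<and>
     set_integrable lborel {0..T} (\<lambda>\<tau>. ls_rhs \<beta> \<gamma> \<tau> (s \<tau>) (r \<tau>) (ls \<tau>) (lr \<tau>) (u1 \<tau>) (u2 \<tau>)) \<and>
     set_integrable lborel {0..T} (\<lambda>\<tau>. lr_rhs \<beta> \<gamma> \<tau> (s \<tau>) (ls \<tau>) (lr \<tau>) (u2 \<tau>)) \<and>
     (\<forall>t\<in>{0..T}. s t = (1 - i0) + (LBINT \<tau>=0..t. s_rhs \<beta> \<tau> (s \<tau>) (r \<tau>) (u1 \<tau>) (u2 \<tau>))) \<and>
     (\<forall>t\<in>{0..T}. r t = 0 + (LBINT \<tau>=0..t. r_rhs \<gamma> (s \<tau>) (r \<tau>))) \<and>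
     (\<forall>t\<in>{0..T}. ls t = -1 - (LBINT \<tau>=t..T. ls_rhs \<beta> \<gamma> \<tau> (s \<tau>) (r \<tau>) (ls \<tau>) (lr \<tau>) (u1 \<tau>) (u2 \<tau>))) \<and>
     (\<forall>t\<in>{0..T}. lr t = 0 - (LBINT \<tau>=t..T. lr_rhs \<beta> \<gamma> \<tau> (s \<tau>) (ls \<tau>) (lr \<tau>) (u2 \<tau>)))"

end

theory Submission
  imports Defs
begin

text \<open>The clamped control laws are 1-Lipschitz, so all right-hand sides are Lipschitz
  in \<open>(s, r, \<lambda>\<^sub>s, \<lambda>\<^sub>r)\<close> as long as \<open>\<lambda>\<^sub>s\<close> stays bounded. That bound holds for small \<open>T\<close>:
  the adjoint equations are linear in \<open>(\<lambda>\<^sub>s, \<lambda>\<^sub>r)\<close> with terminal value \<open>(-1, 0)\<close>, so the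
  supremum \<open>M\<close> of \<open>|\<lambda>\<^sub>s| + |\<lambda>\<^sub>r|\<close> on \<open>[0, T]\<close> satisfies \<open>M \<le> 1 + 2 K T M\<close>, whence
  \<open>M \<le> 2\<close> once \<open>K T \<le> 1/4\<close>. For two solutions, each component of the difference is an
  integral, over a subinterval of \<open>[0, T]\<close>, of right-hand side differences bounded by \<open>L D\<close>,
  where \<open>D\<close> is the sup distance of the solutions; thus \<open>D \<le> L T D\<close>, and \<open>D = 0\<close> when \<open>L T < 1\<close>.\<close>

lemma abs_interval_integral_le_set_integral_abs:
  fixes f :: "real \<Rightarrow> real"
  assumes f: "set_integrable lborel {a..b} f" and "a \<le> c" "c \<le> d" "d \<le> b"
  shows "\<bar>LBINT \<tau>=c..d. f \<tau>\<bar> \<le> (LINT \<tau>:{a..b}|lborel. \<bar>f \<tau>\<bar>)"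
proof -
  have fcd: "set_integrable lborel {c..d} f"
    by (rule set_integrable_subset[OF f]) (use assms in auto)
  have "\<bar>LBINT \<tau>=c..d. f \<tau>\<bar> = \<bar>LINT \<tau>:{c..d}|lborel. f \<tau>\<bar>"
    using assms by (simp add: interval_integral_Icc)
  also have "\<dots> \<le> (LINT \<tau>:{c..d}|lborel. \<bar>f \<tau>\<bar>)"
    using set_integral_norm_bound[OF fcd] by simp
  also have "\<dots> \<le> (LINT \<tau>:{a..b}|lborel. \<bar>f \<tau>\<bar>)"
    unfolding set_lebesgue_integral_def
  proof (rule integral_mono)
    show "integrable lborel (\<lambda>x. indicator {c..d} x *\<^sub>R \<bar>f x\<bar>)"
      using set_integrable_abs[OF fcd] unfolding set_integrable_def .
    show "integrable lborel (\<lambda>x. indicator {a..b} x *\<^sub>R \<bar>f x\<bar>)"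
      using set_integrable_abs[OF f] unfolding set_integrable_def .
    show "indicator {c..d} x *\<^sub>R \<bar>f x\<bar> \<le> indicator {a..b} x *\<^sub>R \<bar>f x\<bar>" for x
      using assms by (auto split: split_indicator)
  qed
  finally show ?thesis .
qed

lemma abs_interval_integral_diff_le:
  fixes f g :: "real \<Rightarrow> real"
  assumes f: "set_integrable lborel {a..b} f" and g: "set_integrable lborel {a..b} g"
    and bound: "\<And>\<tau>. \<tau> \<in> {a..b} \<Longrightarrow> \<bar>f \<tau> - g \<tau>\<bar> \<le> C"
    and "a \<le> c" "c \<le> d" "d \<le> b"
  shows "\<bar>(LBINT \<tau>=c..d. f \<tau>) - (LBINT \<tau>=c..d. g \<tau>)\<bar> \<le> C * (b - a)"
proof -
  have h: "set_integrable lborel {c..d} (\<lambda>\<tau>. f \<tau> - g \<tau>)"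
    using set_integrable_subset[OF f] set_integrable_subset[OF g] assms by auto
  have "\<bar>(LBINT \<tau>=c..d. f \<tau>) - (LBINT \<tau>=c..d. g \<tau>)\<bar> = \<bar>LINT \<tau>:{c..d}|lborel. f \<tau> - g \<tau>\<bar>"
    using assms set_integrable_subset[OF f] set_integrable_subset[OF g]
    by (simp add: interval_integral_Icc set_integral_diff)
  also have "\<dots> \<le> (LINT \<tau>:{c..d}|lborel. \<bar>f \<tau> - g \<tau>\<bar>)"
    using set_integral_norm_bound[OF h] by simp
  also have "\<dots> \<le> (LINT \<tau>:{c..d}|lborel. C)"
    by (rule set_integral_mono[OF set_integrable_abs[OF h]])
       (use bound assms in \<open>auto intro!: borel_integrable_atLeastAtMost' continuous_intros\<close>)
  also have "\<dots> = C * (d - c)"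
    using assms by (simp add: set_integral_const)
  also have "\<dots> \<le> C * (b - a)"
  proof (rule mult_left_mono)
    have "\<bar>f c - g c\<bar> \<le> C"
      using assms by (intro bound) auto
    then show "0 \<le> C"
      by (meson abs_ge_zero order_trans)
  qed (use assms in auto)
  finally show ?thesis .
qed

lemma abs_interval_integral_le:
  fixes f :: "real \<Rightarrow> real"
  assumes "set_integrable lborel {a..b} f" and "\<And>\<tau>. \<tau> \<in> {a..b} \<Longrightarrow> \<bar>f \<tau>\<bar> \<le> C"
    and "a \<le> c" "c \<le> d" "d \<le> b"
  shows "\<bar>LBINT \<tau>=c..d. f \<tau>\<bar> \<le> C * (b - a)"
  using abs_interval_integral_diff_le[of a b f "\<lambda>_. 0" C c d] assms
  by (simp add: set_integrable_def)

lemma le_of_self_bounded_SUP: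
  fixes f :: "'a \<Rightarrow> real"
  assumes "S \<noteq> {}" "bdd_above (f ` S)" "q < 1"
    and self_bound: "\<And>x. x \<in> S \<Longrightarrow> f x \<le> a + q * (SUP y\<in>S. f y)"
    and "x \<in> S"
  shows "f x \<le> a / (1 - q)"
proof -
  have "(SUP y\<in>S. f y) \<le> a + q * (SUP y\<in>S. f y)"
    using assms by (intro cSUP_least) auto
  then have "(SUP y\<in>S. f y) \<le> a / (1 - q)"
    using \<open>q < 1\<close> by (simp add: field_simps)
  then show ?thesis
    using cSUP_upper[OF \<open>x \<in> S\<close> \<open>bdd_above (f ` S)\<close>] by linarith
qed

lemma abs_mult_diff_le:
  fixes a b a' b' A B :: real
  assumes "\<bar>a\<bar> \<le> A" "\<bar>b'\<bar> \<le> B"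
  shows "\<bar>a * b - a' * b'\<bar> \<le> A * \<bar>b - b'\<bar> + B * \<bar>a - a'\<bar>"
proof -
  have "a * b - a' * b' = a * (b - b') + b' * (a - a')"
    by (simp add: algebra_simps)
  then have "\<bar>a * b - a' * b'\<bar> \<le> \<bar>a\<bar> * \<bar>b - b'\<bar> + \<bar>b'\<bar> * \<bar>a - a'\<bar>"
    by (metis abs_mult abs_triangle_ineq)
  also have "\<dots> \<le> A * \<bar>b - b'\<bar> + B * \<bar>a - a'\<bar>"
    using assms by (intro add_mono mult_right_mono) auto
  finally show ?thesis .
qed

definition clamp :: "real \<Rightarrow> real \<Rightarrow> real" where
  "clamp U x = min (max x 0) U"

lemma clamp_bounds: "0 \<le> U \<Longrightarrow> clamp U x \<in> {0..U}"
  by (simp add: clamp_def)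

lemma abs_clamp_diff_le: "\<bar>clamp U x - clamp U y\<bar> \<le> \<bar>x - y\<bar>"
  by (auto simp: clamp_def min_def max_def abs_if)

lemma control_laws_lipschitz:
  fixes b c s r l s' r' l' \<delta> :: real
  assumes "s \<in> {0..1}" "r \<in> {0..1}" "s' \<in> {0..1}" "r' \<in> {0..1}" "\<bar>l\<bar> \<le> 2" "\<bar>l'\<bar> \<le> 2"
    and "0 < b" "0 < c"
    and ds: "\<bar>s - s'\<bar> \<le> \<delta>" and dr: "\<bar>r - r'\<bar> \<le> \<delta>" and dl: "\<bar>l - l'\<bar> \<le> \<delta>"
  shows "\<bar>clamp U1 (l * s / (- 2 * b)) - clamp U1 (l' * s' / (- 2 * b))\<bar> \<le> 3 / (2 * b) * \<delta>"
    and "\<bar>clamp U2 (l * s * (1 - 2 * s - r) / (- 2 * c))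
          - clamp U2 (l' * s' * (1 - 2 * s' - r') / (- 2 * c))\<bar> \<le> 6 / c * \<delta>"
proof -
  have "\<bar>l * s - l' * s'\<bar> \<le> 2 * \<bar>s - s'\<bar> + 1 * \<bar>l - l'\<bar>"
    by (rule abs_mult_diff_le) (use assms in auto)
  then have d_ls: "\<bar>l * s - l' * s'\<bar> \<le> 3 * \<delta>"
    using ds dl by argo
  have "\<bar>l * s * (1 - 2 * s - r) - l' * s' * (1 - 2 * s' - r')\<bar>
      \<le> 2 * \<bar>(1 - 2 * s - r) - (1 - 2 * s' - r')\<bar> + 2 * \<bar>l * s - l' * s'\<bar>"
  proof (rule abs_mult_diff_le)
    show "\<bar>l * s\<bar> \<le> 2"
      using assms mult_mono[of "\<bar>l\<bar>" 2 "\<bar>s\<bar>" 1] by (simp add: abs_mult)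
  qed (use assms in auto)
  moreover have "\<bar>(1 - 2 * s - r) - (1 - 2 * s' - r')\<bar> \<le> 3 * \<delta>"
    using ds dr by (simp add: abs_le_iff)
  ultimately have d_lsw: "\<bar>l * s * (1 - 2 * s - r) - l' * s' * (1 - 2 * s' - r')\<bar> \<le> 12 * \<delta>"
    using d_ls by argo
  have "\<bar>clamp U1 (l * s / (- 2 * b)) - clamp U1 (l' * s' / (- 2 * b))\<bar>
      \<le> \<bar>l * s / (- 2 * b) - l' * s' / (- 2 * b)\<bar>"
    by (rule abs_clamp_diff_le)
  also have "\<dots> = \<bar>l * s - l' * s'\<bar> / (2 * b)"
    using \<open>0 < b\<close> by (simp add: diff_divide_distrib[symmetric] abs_divide)
  also have "\<dots> \<le> 3 / (2 * b) * \<delta>"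
    using d_ls \<open>0 < b\<close> by (simp add: divide_right_mono)
  finally show "\<bar>clamp U1 (l * s / (- 2 * b)) - clamp U1 (l' * s' / (- 2 * b))\<bar> \<le> 3 / (2 * b) * \<delta>" .
  have "\<bar>clamp U2 (l * s * (1 - 2 * s - r) / (- 2 * c))
          - clamp U2 (l' * s' * (1 - 2 * s' - r') / (- 2 * c))\<bar>
      \<le> \<bar>l * s * (1 - 2 * s - r) / (- 2 * c) - l' * s' * (1 - 2 * s' - r') / (- 2 * c)\<bar>"
    by (rule abs_clamp_diff_le)
  also have "\<dots> = \<bar>l * s * (1 - 2 * s - r) - l' * s' * (1 - 2 * s' - r')\<bar> / (2 * c)"
    using \<open>0 < c\<close> by (simp add: diff_divide_distrib[symmetric] abs_divide)
  also have "\<dots> \<le> 6 / c * \<delta>"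
    using d_lsw \<open>0 < c\<close> by (simp add: field_simps)
  finally show "\<bar>clamp U2 (l * s * (1 - 2 * s - r) / (- 2 * c))
          - clamp U2 (l' * s' * (1 - 2 * s' - r') / (- 2 * c))\<bar> \<le> 6 / c * \<delta>" .
qed

lemma s_rhs_lipschitz:
  fixes \<beta> :: "real \<Rightarrow> real"
  assumes \<beta>: "\<beta> t \<in> {0..B}" and s: "s \<in> {0..1}" and s': "s' \<in> {0..1}" and r': "r' \<in> {0..1}"
    and u: "u \<in> {0..U1}" and v: "v \<in> {0..U2}"
    and ds: "\<bar>s - s'\<bar> \<le> \<delta>" and dr: "\<bar>r - r'\<bar> \<le> \<delta>"
    and du: "\<bar>u - u'\<bar> \<le> \<delta>" and dv: "\<bar>v - v'\<bar> \<le> \<delta>"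
  shows "\<bar>s_rhs \<beta> t s r u v - s_rhs \<beta> t s' r' u' v'\<bar> \<le> (3 * (B + U2) + U1 + 2) * \<delta>"
proof -
  have w': "\<bar>1 - s' - r'\<bar> \<le> 1"
    using s' r' by (simp add: abs_le_iff)
  have "\<bar>s * (1 - s - r) - s' * (1 - s' - r')\<bar> \<le> 1 * \<bar>(1 - s - r) - (1 - s' - r')\<bar> + 1 * \<bar>s - s'\<bar>"
    by (rule abs_mult_diff_le) (use s w' in auto)
  moreover have "\<bar>(1 - s - r) - (1 - s' - r')\<bar> \<le> 2 * \<delta>"
    using ds dr by (simp add: abs_le_iff)
  ultimately have d_sw: "\<bar>s * (1 - s - r) - s' * (1 - s' - r')\<bar> \<le> 3 * \<delta>"
    using ds by argo
  have sw': "\<bar>s' * (1 - s' - r')\<bar> \<le> 1"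
    using s' w' mult_mono[of "\<bar>s'\<bar>" 1 "\<bar>1 - s' - r'\<bar>" 1] by (simp add: abs_mult)
  have "\<bar>(\<beta> t + v) * (s * (1 - s - r)) - (\<beta> t + v') * (s' * (1 - s' - r'))\<bar>
      \<le> (B + U2) * \<bar>s * (1 - s - r) - s' * (1 - s' - r')\<bar> + 1 * \<bar>(\<beta> t + v) - (\<beta> t + v')\<bar>"
    by (rule abs_mult_diff_le) (use \<beta> v sw' in auto)
  also have "\<dots> \<le> (B + U2) * (3 * \<delta>) + \<delta>"
    using d_sw dv \<beta> v by (intro add_mono mult_left_mono) auto
  finally have d1: "\<bar>(\<beta> t + v) * (s * (1 - s - r)) - (\<beta> t + v') * (s' * (1 - s' - r'))\<bar>
      \<le> (B + U2) * (3 * \<delta>) + \<delta>" .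
  have "\<bar>u * s - u' * s'\<bar> \<le> U1 * \<bar>s - s'\<bar> + 1 * \<bar>u - u'\<bar>"
    by (rule abs_mult_diff_le) (use u s' in auto)
  also have "\<dots> \<le> U1 * \<delta> + \<delta>"
    using ds du u by (intro add_mono mult_left_mono) auto
  finally have d2: "\<bar>u * s - u' * s'\<bar> \<le> U1 * \<delta> + \<delta>" .
  have "s_rhs \<beta> t s r u v - s_rhs \<beta> t s' r' u' v'
      = - ((\<beta> t + v) * (s * (1 - s - r)) - (\<beta> t + v') * (s' * (1 - s' - r'))) - (u * s - u' * s')"
    unfolding s_rhs_def by (simp add: algebra_simps)
  moreover have "(3 * (B + U2) + U1 + 2) * \<delta> = ((B + U2) * (3 * \<delta>) + \<delta>) + (U1 * \<delta> + \<delta>)"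
    by (simp add: algebra_simps)
  ultimately show ?thesis
    using d1 d2 by argo
qed

lemma r_rhs_lipschitz:
  assumes "0 \<le> \<gamma>" "\<bar>s - s'\<bar> \<le> \<delta>" "\<bar>r - r'\<bar> \<le> \<delta>"
  shows "\<bar>r_rhs \<gamma> s r - r_rhs \<gamma> s' r'\<bar> \<le> 2 * \<gamma> * \<delta>"
proof -
  have "r_rhs \<gamma> s r - r_rhs \<gamma> s' r' = \<gamma> * ((s' - s) + (r' - r))"
    by (simp add: r_rhs_def algebra_simps)
  then have "\<bar>r_rhs \<gamma> s r - r_rhs \<gamma> s' r'\<bar> = \<gamma> * \<bar>(s' - s) + (r' - r)\<bar>"
    using assms by (simp add: abs_mult)
  also have "\<dots> \<le> \<gamma> * (2 * \<delta>)"
    using assms by (intro mult_left_mono) (auto simp: abs_le_iff)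
  finally show ?thesis by simp
qed

lemma ls_rhs_lipschitz:
  fixes \<beta> :: "real \<Rightarrow> real"
  assumes \<gamma>: "0 \<le> \<gamma>" and \<beta>: "\<beta> t \<in> {0..B}" and s': "s' \<in> {0..1}" and r': "r' \<in> {0..1}"
    and u': "u' \<in> {0..U1}" and v: "v \<in> {0..U2}" and v': "v' \<in> {0..U2}" and l: "\<bar>l\<bar> \<le> 2"
    and ds: "\<bar>s - s'\<bar> \<le> \<delta>" and dr: "\<bar>r - r'\<bar> \<le> \<delta>" and dl: "\<bar>l - l'\<bar> \<le> \<delta>"
    and dm: "\<bar>m - m'\<bar> \<le> \<delta>" and du: "\<bar>u - u'\<bar> \<le> \<delta>" and dv: "\<bar>v - v'\<bar> \<le> \<delta>"
  shows "\<bar>ls_rhs \<beta> \<gamma> t s r l m u v - ls_rhs \<beta> \<gamma> t s' r' l' m' u' v'\<bar>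
    \<le> (8 * (B + U2) + U1 + 6 + \<gamma>) * \<delta>"
proof -
  define w where "w = 1 - 2 * s - r"
  define w' where "w' = 1 - 2 * s' - r'"
  define q where "q = \<beta> t * w + u + v * w"
  define q' where "q' = \<beta> t * w' + u' + v' * w'"
  have w': "\<bar>w'\<bar> \<le> 2"
    using s' r' unfolding w'_def by (simp add: abs_le_iff)
  have dw: "\<bar>w - w'\<bar> \<le> 3 * \<delta>"
    using ds dr unfolding w_def w'_def by (simp add: abs_le_iff)
  have q': "\<bar>q'\<bar> \<le> 2 * B + U1 + 2 * U2"
  proof -
    have "\<bar>\<beta> t\<bar> * \<bar>w'\<bar> \<le> B * 2"
      using \<beta> w' by (intro mult_mono) auto
    moreover have "\<bar>v'\<bar> * \<bar>w'\<bar> \<le> U2 * 2"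
      using v' w' by (intro mult_mono) auto
    moreover have "0 \<le> u'" "u' \<le> U1"
      using u' by auto
    ultimately show ?thesis
      unfolding q'_def abs_mult[symmetric] by argo
  qed
  have "\<bar>\<beta> t * w - \<beta> t * w'\<bar> = \<bar>\<beta> t\<bar> * \<bar>w - w'\<bar>"
    by (simp add: abs_mult right_diff_distrib[symmetric])
  also have "\<dots> \<le> B * (3 * \<delta>)"
    using \<beta> dw by (intro mult_mono) auto
  finally have d_bw: "\<bar>\<beta> t * w - \<beta> t * w'\<bar> \<le> B * (3 * \<delta>)" .
  have "\<bar>v * w - v' * w'\<bar> \<le> U2 * \<bar>w - w'\<bar> + 2 * \<bar>v - v'\<bar>"
    by (rule abs_mult_diff_le) (use v w' in auto)
  moreover have "U2 * \<bar>w - w'\<bar> \<le> U2 * (3 * \<delta>)"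
    using dw v by (intro mult_left_mono) auto
  ultimately have d_vw: "\<bar>v * w - v' * w'\<bar> \<le> U2 * (3 * \<delta>) + 2 * \<delta>"
    using dv by argo
  have "q - q' = (\<beta> t * w - \<beta> t * w') + (u - u') + (v * w - v' * w')"
    unfolding q_def q'_def by (simp add: algebra_simps)
  moreover have "(3 * (B + U2) + 3) * \<delta> = B * (3 * \<delta>) + \<delta> + (U2 * (3 * \<delta>) + 2 * \<delta>)"
    by (simp add: algebra_simps)
  ultimately have dq: "\<bar>q - q'\<bar> \<le> (3 * (B + U2) + 3) * \<delta>"
    using d_bw d_vw du by argo
  have "\<bar>l * q - l' * q'\<bar> \<le> 2 * \<bar>q - q'\<bar> + (2 * B + U1 + 2 * U2) * \<bar>l - l'\<bar>"
    by (rule abs_mult_diff_le) (use l q' in auto)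
  also have "\<dots> \<le> 2 * ((3 * (B + U2) + 3) * \<delta>) + (2 * B + U1 + 2 * U2) * \<delta>"
    using dq dl \<beta> v u' by (intro add_mono mult_left_mono) auto
  also have "\<dots> = (8 * (B + U2) + U1 + 6) * \<delta>"
    by (simp add: algebra_simps)
  finally have d1: "\<bar>l * q - l' * q'\<bar> \<le> (8 * (B + U2) + U1 + 6) * \<delta>" .
  have d2: "\<bar>\<gamma> * m - \<gamma> * m'\<bar> \<le> \<gamma> * \<delta>"
    using \<gamma> dm by (simp add: abs_mult right_diff_distrib[symmetric] mult_left_mono)
  have "ls_rhs \<beta> \<gamma> t s r l m u v - ls_rhs \<beta> \<gamma> t s' r' l' m' u' v'
      = (l * q - l' * q') + (\<gamma> * m - \<gamma> * m')"
    unfolding ls_rhs_def q_def q'_def w_def w'_def by (simp add: algebra_simps)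
  moreover have "(8 * (B + U2) + U1 + 6 + \<gamma>) * \<delta> = (8 * (B + U2) + U1 + 6) * \<delta> + \<gamma> * \<delta>"
    by (simp add: algebra_simps)
  ultimately show ?thesis
    using d1 d2 by argo
qed

lemma lr_rhs_lipschitz:
  fixes \<beta> :: "real \<Rightarrow> real"
  assumes \<gamma>: "0 \<le> \<gamma>" and \<beta>: "\<beta> t \<in> {0..B}" and s: "s \<in> {0..1}" and s': "s' \<in> {0..1}"
    and v': "v' \<in> {0..U2}" and l: "\<bar>l\<bar> \<le> 2"
    and ds: "\<bar>s - s'\<bar> \<le> \<delta>" and dl: "\<bar>l - l'\<bar> \<le> \<delta>" and dm: "\<bar>m - m'\<bar> \<le> \<delta>"
    and dv: "\<bar>v - v'\<bar> \<le> \<delta>"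
  shows "\<bar>lr_rhs \<beta> \<gamma> t s l m v - lr_rhs \<beta> \<gamma> t s' l' m' v'\<bar> \<le> (3 * (B + U2) + 2 + \<gamma>) * \<delta>"
proof -
  define h where "h = s * (v - \<beta> t)"
  define h' where "h' = s' * (v' - \<beta> t)"
  have vb': "\<bar>v' - \<beta> t\<bar> \<le> B + U2"
    using \<beta> v' by (auto simp: abs_le_iff)
  have h': "\<bar>h'\<bar> \<le> B + U2"
    using s' vb' mult_mono[of "\<bar>s'\<bar>" 1 "\<bar>v' - \<beta> t\<bar>" "B + U2"]
    unfolding h'_def by (simp add: abs_mult)
  have "\<bar>h - h'\<bar> \<le> 1 * \<bar>(v - \<beta> t) - (v' - \<beta> t)\<bar> + (B + U2) * \<bar>s - s'\<bar>"
    unfolding h_def h'_def by (rule abs_mult_diff_le) (use s vb' in auto)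
  also have "\<dots> \<le> \<delta> + (B + U2) * \<delta>"
    using ds dv \<beta> v' by (intro add_mono mult_left_mono) auto
  finally have dh: "\<bar>h - h'\<bar> \<le> \<delta> + (B + U2) * \<delta>" .
  have "\<bar>l * h - l' * h'\<bar> \<le> 2 * \<bar>h - h'\<bar> + (B + U2) * \<bar>l - l'\<bar>"
    by (rule abs_mult_diff_le) (use l h' in auto)
  also have "\<dots> \<le> 2 * (\<delta> + (B + U2) * \<delta>) + (B + U2) * \<delta>"
    using dh dl \<beta> v' by (intro add_mono mult_left_mono) auto
  also have "\<dots> = (3 * (B + U2) + 2) * \<delta>"
    by (simp add: algebra_simps)
  finally have d1: "\<bar>l * h - l' * h'\<bar> \<le> (3 * (B + U2) + 2) * \<delta>" .
  have d2: "\<bar>\<gamma> * m - \<gamma> * m'\<bar> \<le> \<gamma> * \<delta>"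
    using \<gamma> dm by (simp add: abs_mult right_diff_distrib[symmetric] mult_left_mono)
  have "lr_rhs \<beta> \<gamma> t s l m v - lr_rhs \<beta> \<gamma> t s' l' m' v' = (l * h - l' * h') + (\<gamma> * m - \<gamma> * m')"
    unfolding lr_rhs_def h_def h'_def by (simp add: algebra_simps)
  moreover have "(3 * (B + U2) + 2 + \<gamma>) * \<delta> = (3 * (B + U2) + 2) * \<delta> + \<gamma> * \<delta>"
    by (simp add: algebra_simps)
  ultimately show ?thesis
    using d1 d2 by argo
qed

lemma adjoint_rhs_bound:
  fixes \<beta> :: "real \<Rightarrow> real"
  assumes \<gamma>: "0 \<le> \<gamma>" and \<beta>: "\<beta> t \<in> {0..B}" and s: "s \<in> {0..1}" and r: "r \<in> {0..1}"
    and u: "u \<in> {0..U1}" and v: "v \<in> {0..U2}"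
  defines "K \<equiv> 3 * B + U1 + 3 * U2 + \<gamma>"
  shows "\<bar>ls_rhs \<beta> \<gamma> t s r l m u v\<bar> \<le> K * (\<bar>l\<bar> + \<bar>m\<bar>)"
    and "\<bar>lr_rhs \<beta> \<gamma> t s l m v\<bar> \<le> K * (\<bar>l\<bar> + \<bar>m\<bar>)"
proof -
  define w where "w = 1 - 2 * s - r"
  have w: "\<bar>w\<bar> \<le> 2"
    using s r unfolding w_def by (simp add: abs_le_iff)
  have "\<bar>\<beta> t\<bar> * \<bar>w\<bar> \<le> B * 2"
    using \<beta> w by (intro mult_mono) auto
  moreover have "\<bar>v\<bar> * \<bar>w\<bar> \<le> U2 * 2"
    using v w by (intro mult_mono) auto
  moreover have "0 \<le> u" "u \<le> U1"
    using u by auto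
  ultimately have "\<bar>\<beta> t * w + u + v * w\<bar> \<le> 2 * B + U1 + 2 * U2"
    unfolding abs_mult[symmetric] by argo
  also have "\<dots> \<le> K"
    using \<beta> v \<gamma> unfolding K_def by auto
  finally have "\<bar>\<beta> t * w + u + v * w\<bar> * \<bar>l\<bar> \<le> K * \<bar>l\<bar>"
    by (rule mult_right_mono) simp
  then have lq: "\<bar>l * (\<beta> t * w + u + v * w)\<bar> \<le> K * \<bar>l\<bar>"
    by (simp add: abs_mult mult.commute)
  have "\<bar>s * (v - \<beta> t)\<bar> \<le> 1 * (B + U2)"
    unfolding abs_mult using s \<beta> v by (intro mult_mono) (auto simp: abs_le_iff)
  also have "\<dots> \<le> K"
    using \<beta> v \<gamma> u unfolding K_def by auto
  finally have "\<bar>s * (v - \<beta> t)\<bar> * \<bar>l\<bar> \<le> K * \<bar>l\<bar>"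
    by (rule mult_right_mono) simp
  then have lh: "\<bar>l * (s * (v - \<beta> t))\<bar> \<le> K * \<bar>l\<bar>"
    by (simp add: abs_mult mult.commute)
  have gm: "\<bar>\<gamma> * m\<bar> \<le> K * \<bar>m\<bar>"
    using \<gamma> \<beta> u v unfolding K_def abs_mult by (intro mult_right_mono) auto
  have "ls_rhs \<beta> \<gamma> t s r l m u v = l * (\<beta> t * w + u + v * w) + \<gamma> * m"
    unfolding ls_rhs_def w_def by (simp add: algebra_simps)
  then show "\<bar>ls_rhs \<beta> \<gamma> t s r l m u v\<bar> \<le> K * (\<bar>l\<bar> + \<bar>m\<bar>)"
    using lq gm by (simp add: distrib_left)
  have "lr_rhs \<beta> \<gamma> t s l m v = l * (s * (v - \<beta> t)) + \<gamma> * m"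
    unfolding lr_rhs_def by (simp add: algebra_simps)
  then show "\<bar>lr_rhs \<beta> \<gamma> t s l m v\<bar> \<le> K * (\<bar>l\<bar> + \<bar>m\<bar>)"
    using lh gm by (simp add: distrib_left)
qed

lemma optimality_system_controls:
  assumes "optimality_system \<beta> \<gamma> b c u1max u2max i0 T s r ls lr u1 u2" and "t \<in> {0..T}"
  shows "u1 t = clamp u1max (ls t * s t / (- 2 * b))"
    and "u2 t = clamp u2max (ls t * s t * (1 - 2 * s t - r t) / (- 2 * c))"
  using assms unfolding optimality_system_def clamp_def by blast+

lemma optimality_system_bounds:
  assumes "optimality_system \<beta> \<gamma> b c u1max u2max i0 T s r ls lr u1 u2"
    and "0 \<le> u1max" "0 \<le> u2max" and "t \<in> {0..T}"
  shows "s t \<in> {0..1}" "r t \<in> {0..1}" "u1 t \<in> {0..u1max}" "u2 t \<in> {0..u2max}"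
proof -
  have "0 \<le> s t \<and> s t \<le> 1 \<and> 0 \<le> r t \<and> r t \<le> 1"
    using assms(1,4) unfolding optimality_system_def by blast
  then show "s t \<in> {0..1}" "r t \<in> {0..1}"
    by auto
  show "u1 t \<in> {0..u1max}" "u2 t \<in> {0..u2max}"
    unfolding optimality_system_controls[OF assms(1,4)] using assms(2,3) clamp_bounds by auto
qed

lemma optimality_system_adjoint_le_2:
  fixes \<beta> :: "real \<Rightarrow> real"
  assumes os: "optimality_system \<beta> \<gamma> b c u1max u2max i0 T s r ls lr u1 u2"
    and \<gamma>: "0 \<le> \<gamma>" and U: "0 \<le> u1max" "0 \<le> u2max" and \<beta>: "\<And>\<tau>. \<beta> \<tau> \<in> {0..B}"
    and small: "T * (3 * B + u1max + 3 * u2max + \<gamma>) \<le> 1 / 4"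
    and t: "t \<in> {0..T}"
  shows "\<bar>ls t\<bar> \<le> 2 \<and> \<bar>lr t\<bar> \<le> 2"
proof -
  define K where "K = 3 * B + u1max + 3 * u2max + \<gamma>"
  define fl where "fl \<tau> = ls_rhs \<beta> \<gamma> \<tau> (s \<tau>) (r \<tau>) (ls \<tau>) (lr \<tau>) (u1 \<tau>) (u2 \<tau>)" for \<tau>
  define fm where "fm \<tau> = lr_rhs \<beta> \<gamma> \<tau> (s \<tau>) (ls \<tau>) (lr \<tau>) (u2 \<tau>)" for \<tau>
  define F where "F \<tau> = \<bar>ls \<tau>\<bar> + \<bar>lr \<tau>\<bar>" for \<tau>
  have fl: "set_integrable lborel {0..T} fl" and fm: "set_integrable lborel {0..T} fm"
    using os unfolding optimality_system_def fl_def fm_def by blast+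
  have "\<forall>\<tau>\<in>{0..T}. ls \<tau> = -1 - (LBINT \<sigma>=\<tau>..T. fl \<sigma>)"
    and "\<forall>\<tau>\<in>{0..T}. lr \<tau> = 0 - (LBINT \<sigma>=\<tau>..T. fm \<sigma>)"
    using os unfolding optimality_system_def fl_def fm_def by blast+
  then have F_le: "F \<tau> \<le> 1 + \<bar>LBINT \<sigma>=\<tau>..T. fl \<sigma>\<bar> + \<bar>LBINT \<sigma>=\<tau>..T. fm \<sigma>\<bar>" if "\<tau> \<in> {0..T}" for \<tau>
    using that unfolding F_def by auto
  have B: "0 \<le> B"
    using \<beta>[of 0] by simp
  have K: "0 \<le> K"
    unfolding K_def using B U \<gamma> by simp
  have bdd: "bdd_above (F ` {0..T})"
  proof (rule bdd_aboveI2)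
    fix \<tau> assume "\<tau> \<in> {0..T}"
    then show "F \<tau> \<le> 1 + (LINT \<sigma>:{0..T}|lborel. \<bar>fl \<sigma>\<bar>) + (LINT \<sigma>:{0..T}|lborel. \<bar>fm \<sigma>\<bar>)"
      using F_le abs_interval_integral_le_set_integral_abs[OF fl, of \<tau> T]
        abs_interval_integral_le_set_integral_abs[OF fm, of \<tau> T] by fastforce
  qed
  define M where "M = (SUP \<sigma>\<in>{0..T}. F \<sigma>)"
  have rhs_le: "\<bar>fl \<tau>\<bar> \<le> K * M \<and> \<bar>fm \<tau>\<bar> \<le> K * M"
    if "\<tau> \<in> {0..T}" for \<tau>
  proof -
    have "\<bar>fl \<tau>\<bar> \<le> K * F \<tau>" "\<bar>fm \<tau>\<bar> \<le> K * F \<tau>"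
      unfolding fl_def fm_def F_def K_def
      using adjoint_rhs_bound[where \<beta>=\<beta> and t=\<tau>, OF \<gamma> \<beta> optimality_system_bounds[OF os U that]]
      by blast+
    moreover have "K * F \<tau> \<le> K * M"
      using cSUP_upper[OF that bdd] K unfolding M_def by (rule mult_left_mono)
    ultimately show ?thesis
      by linarith
  qed
  have "F \<tau> \<le> 1 + (2 * K * T) * M" if "\<tau> \<in> {0..T}" for \<tau>
  proof -
    have "\<bar>LBINT \<sigma>=\<tau>..T. fl \<sigma>\<bar> \<le> K * M * (T - 0)"
      by (rule abs_interval_integral_le[OF fl]) (use rhs_le that in auto)
    moreover have "\<bar>LBINT \<sigma>=\<tau>..T. fm \<sigma>\<bar> \<le> K * M * (T - 0)"
      by (rule abs_interval_integral_le[OF fm]) (use rhs_le that in auto)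
    ultimately show ?thesis
      using F_le[OF that] by (simp add: algebra_simps)
  qed
  moreover have q: "2 * K * T \<le> 1 / 2"
    using small unfolding K_def by (simp add: algebra_simps)
  ultimately have "F t \<le> 1 / (1 - 2 * K * T)"
    using bdd t unfolding M_def by (intro le_of_self_bounded_SUP) auto
  also have "\<dots> \<le> 2"
    using q by (simp add: field_simps)
  finally show ?thesis
    unfolding F_def by auto
qed

lemma optimality_system_rhs_diff_le:
  fixes \<beta> :: "real \<Rightarrow> real"
  assumes os: "optimality_system \<beta> \<gamma> b c u1max u2max i0 T s r ls lr u1 u2"
    and os': "optimality_system \<beta> \<gamma> b c u1max u2max i0 T s' r' ls' lr' u1' u2'"
    and b: "0 < b" and c: "0 < c" and \<gamma>: "0 \<le> \<gamma>" and U: "0 \<le> u1max" "0 \<le> u2max"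
    and \<beta>: "\<beta> \<tau> \<in> {0..B}" and \<tau>: "\<tau> \<in> {0..T}" and l: "\<bar>ls \<tau>\<bar> \<le> 2" and l': "\<bar>ls' \<tau>\<bar> \<le> 2"
    and ds: "\<bar>s \<tau> - s' \<tau>\<bar> \<le> \<delta>" and dr: "\<bar>r \<tau> - r' \<tau>\<bar> \<le> \<delta>"
    and dl: "\<bar>ls \<tau> - ls' \<tau>\<bar> \<le> \<delta>" and dm: "\<bar>lr \<tau> - lr' \<tau>\<bar> \<le> \<delta>"
  defines "L \<equiv> (8 * (B + u1max + u2max + 1) + 2 * \<gamma>) * (1 + 3 / (2 * b) + 6 / c)"
  shows "\<bar>s_rhs \<beta> \<tau> (s \<tau>) (r \<tau>) (u1 \<tau>) (u2 \<tau>)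
          - s_rhs \<beta> \<tau> (s' \<tau>) (r' \<tau>) (u1' \<tau>) (u2' \<tau>)\<bar> \<le> L * \<delta>"
    and "\<bar>r_rhs \<gamma> (s \<tau>) (r \<tau>) - r_rhs \<gamma> (s' \<tau>) (r' \<tau>)\<bar> \<le> L * \<delta>"
    and "\<bar>ls_rhs \<beta> \<gamma> \<tau> (s \<tau>) (r \<tau>) (ls \<tau>) (lr \<tau>) (u1 \<tau>) (u2 \<tau>)
          - ls_rhs \<beta> \<gamma> \<tau> (s' \<tau>) (r' \<tau>) (ls' \<tau>) (lr' \<tau>) (u1' \<tau>) (u2' \<tau>)\<bar> \<le> L * \<delta>"
    and "\<bar>lr_rhs \<beta> \<gamma> \<tau> (s \<tau>) (ls \<tau>) (lr \<tau>) (u2 \<tau>)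
          - lr_rhs \<beta> \<gamma> \<tau> (s' \<tau>) (ls' \<tau>) (lr' \<tau>) (u2' \<tau>)\<bar> \<le> L * \<delta>"
proof -
  define \<kappa> where "\<kappa> = 1 + 3 / (2 * b) + 6 / c"
  define \<Lambda> where "\<Lambda> = 8 * (B + u1max + u2max + 1) + 2 * \<gamma>"
  note bounds = optimality_system_bounds[OF os U \<tau>]
  note bounds' = optimality_system_bounds[OF os' U \<tau>]
  have \<delta>: "0 \<le> \<delta>"
    using ds by (meson abs_ge_zero order_trans)
  have B: "0 \<le> B"
    using \<beta> by simp
  have \<kappa>\<delta>: "\<delta> \<le> \<kappa> * \<delta>"
    using \<delta> b c unfolding \<kappa>_def by (simp add: algebra_simps)
  have "\<bar>u1 \<tau> - u1' \<tau>\<bar> \<le> 3 / (2 * b) * \<delta>" "\<bar>u2 \<tau> - u2' \<tau>\<bar> \<le> 6 / c * \<delta>"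
    unfolding optimality_system_controls[OF os \<tau>] optimality_system_controls[OF os' \<tau>]
    using control_laws_lipschitz[OF bounds(1,2) bounds'(1,2) l l' b c ds dr dl] by blast+
  moreover have "3 / (2 * b) * \<delta> \<le> \<kappa> * \<delta>" "6 / c * \<delta> \<le> \<kappa> * \<delta>"
    using \<delta> b c unfolding \<kappa>_def by (intro mult_right_mono; simp)+
  ultimately have du: "\<bar>u1 \<tau> - u1' \<tau>\<bar> \<le> \<kappa> * \<delta>" and dv: "\<bar>u2 \<tau> - u2' \<tau>\<bar> \<le> \<kappa> * \<delta>"
    by linarith+
  have ds': "\<bar>s \<tau> - s' \<tau>\<bar> \<le> \<kappa> * \<delta>" and dr': "\<bar>r \<tau> - r' \<tau>\<bar> \<le> \<kappa> * \<delta>"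
    and dl': "\<bar>ls \<tau> - ls' \<tau>\<bar> \<le> \<kappa> * \<delta>" and dm': "\<bar>lr \<tau> - lr' \<tau>\<bar> \<le> \<kappa> * \<delta>"
    using ds dr dl dm \<kappa>\<delta> by linarith+
  have L: "L * \<delta> = \<Lambda> * (\<kappa> * \<delta>)"
    unfolding L_def \<Lambda>_def \<kappa>_def by simp
  have le_L: "x \<le> L * \<delta>" if "x \<le> C * (\<kappa> * \<delta>)" and "C \<le> \<Lambda>" for x C
  proof -
    have "C * (\<kappa> * \<delta>) \<le> \<Lambda> * (\<kappa> * \<delta>)"
      using that(2) \<delta> b c by (intro mult_right_mono) (auto simp: \<kappa>_def)
    then show ?thesis
      unfolding L using that(1) by linarith
  qed
  show "\<bar>s_rhs \<beta> \<tau> (s \<tau>) (r \<tau>) (u1 \<tau>) (u2 \<tau>)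
          - s_rhs \<beta> \<tau> (s' \<tau>) (r' \<tau>) (u1' \<tau>) (u2' \<tau>)\<bar> \<le> L * \<delta>"
    using s_rhs_lipschitz[where \<beta>=\<beta> and t=\<tau>,
        OF \<beta> bounds(1) bounds'(1,2) bounds(3,4) ds' dr' du dv]
    by (rule le_L) (use B U \<gamma> in \<open>simp add: \<Lambda>_def\<close>)
  show "\<bar>r_rhs \<gamma> (s \<tau>) (r \<tau>) - r_rhs \<gamma> (s' \<tau>) (r' \<tau>)\<bar> \<le> L * \<delta>"
    using r_rhs_lipschitz[OF \<gamma> ds' dr']
    by (rule le_L) (use B U \<gamma> in \<open>simp add: \<Lambda>_def\<close>)
  show "\<bar>ls_rhs \<beta> \<gamma> \<tau> (s \<tau>) (r \<tau>) (ls \<tau>) (lr \<tau>) (u1 \<tau>) (u2 \<tau>)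
          - ls_rhs \<beta> \<gamma> \<tau> (s' \<tau>) (r' \<tau>) (ls' \<tau>) (lr' \<tau>) (u1' \<tau>) (u2' \<tau>)\<bar> \<le> L * \<delta>"
    using ls_rhs_lipschitz[where \<beta>=\<beta> and t=\<tau>,
        OF \<gamma> \<beta> bounds'(1,2,3) bounds(4) bounds'(4) l ds' dr' dl' dm' du dv]
    by (rule le_L) (use B U \<gamma> in \<open>simp add: \<Lambda>_def\<close>)
  show "\<bar>lr_rhs \<beta> \<gamma> \<tau> (s \<tau>) (ls \<tau>) (lr \<tau>) (u2 \<tau>)
          - lr_rhs \<beta> \<gamma> \<tau> (s' \<tau>) (ls' \<tau>) (lr' \<tau>) (u2' \<tau>)\<bar> \<le> L * \<delta>"
    using lr_rhs_lipschitz[where \<beta>=\<beta> and t=\<tau>,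
        OF \<gamma> \<beta> bounds(1) bounds'(1) bounds'(4) l ds' dl' dm' dv]
    by (rule le_L) (use B U \<gamma> in \<open>simp add: \<Lambda>_def\<close>)
qed

lemma optimality_system_diff_le:
  fixes \<beta> :: "real \<Rightarrow> real"
  assumes os: "optimality_system \<beta> \<gamma> b c u1max u2max i0 T s r ls lr u1 u2"
    and os': "optimality_system \<beta> \<gamma> b c u1max u2max i0 T s' r' ls' lr' u1' u2'"
    and b: "0 < b" and c: "0 < c" and \<gamma>: "0 \<le> \<gamma>" and U: "0 \<le> u1max" "0 \<le> u2max"
    and \<beta>: "\<And>\<tau>. \<beta> \<tau> \<in> {0..B}"
    and l: "\<And>\<tau>. \<tau> \<in> {0..T} \<Longrightarrow> \<bar>ls \<tau>\<bar> \<le> 2" and l': "\<And>\<tau>. \<tau> \<in> {0..T} \<Longrightarrow> \<bar>ls' \<tau>\<bar> \<le> 2"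
    and diff: "\<And>\<tau>. \<tau> \<in> {0..T} \<Longrightarrow> \<bar>s \<tau> - s' \<tau>\<bar> \<le> \<delta> \<and> \<bar>r \<tau> - r' \<tau>\<bar> \<le> \<delta>
                                  \<and> \<bar>ls \<tau> - ls' \<tau>\<bar> \<le> \<delta> \<and> \<bar>lr \<tau> - lr' \<tau>\<bar> \<le> \<delta>"
    and t: "t \<in> {0..T}"
  defines "L \<equiv> (8 * (B + u1max + u2max + 1) + 2 * \<gamma>) * (1 + 3 / (2 * b) + 6 / c)"
  shows "\<bar>s t - s' t\<bar> \<le> L * \<delta> * T \<and> \<bar>r t - r' t\<bar> \<le> L * \<delta> * T
         \<and> \<bar>ls t - ls' t\<bar> \<le> L * \<delta> * T \<and> \<bar>lr t - lr' t\<bar> \<le> L * \<delta> * T"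
proof -
  define fs where "fs \<tau> = s_rhs \<beta> \<tau> (s \<tau>) (r \<tau>) (u1 \<tau>) (u2 \<tau>)" for \<tau>
  define fr where "fr \<tau> = r_rhs \<gamma> (s \<tau>) (r \<tau>)" for \<tau>
  define fl where "fl \<tau> = ls_rhs \<beta> \<gamma> \<tau> (s \<tau>) (r \<tau>) (ls \<tau>) (lr \<tau>) (u1 \<tau>) (u2 \<tau>)" for \<tau>
  define fm where "fm \<tau> = lr_rhs \<beta> \<gamma> \<tau> (s \<tau>) (ls \<tau>) (lr \<tau>) (u2 \<tau>)" for \<tau>
  define fs' where "fs' \<tau> = s_rhs \<beta> \<tau> (s' \<tau>) (r' \<tau>) (u1' \<tau>) (u2' \<tau>)" for \<tau>
  define fr' where "fr' \<tau> = r_rhs \<gamma> (s' \<tau>) (r' \<tau>)" for \<tau>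
  define fl' where "fl' \<tau> = ls_rhs \<beta> \<gamma> \<tau> (s' \<tau>) (r' \<tau>) (ls' \<tau>) (lr' \<tau>) (u1' \<tau>) (u2' \<tau>)" for \<tau>
  define fm' where "fm' \<tau> = lr_rhs \<beta> \<gamma> \<tau> (s' \<tau>) (ls' \<tau>) (lr' \<tau>) (u2' \<tau>)" for \<tau>
  note defs = fs_def fr_def fl_def fm_def fs'_def fr'_def fl'_def fm'_def
  have int: "set_integrable lborel {0..T} fs" "set_integrable lborel {0..T} fs'"
    "set_integrable lborel {0..T} fr" "set_integrable lborel {0..T} fr'"
    "set_integrable lborel {0..T} fl" "set_integrable lborel {0..T} fl'"
    "set_integrable lborel {0..T} fm" "set_integrable lborel {0..T} fm'"
    using os os' unfolding optimality_system_def defs by blast+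
  have rhs: "\<bar>fs \<tau> - fs' \<tau>\<bar> \<le> L * \<delta>" "\<bar>fr \<tau> - fr' \<tau>\<bar> \<le> L * \<delta>"
    "\<bar>fl \<tau> - fl' \<tau>\<bar> \<le> L * \<delta>" "\<bar>fm \<tau> - fm' \<tau>\<bar> \<le> L * \<delta>" if \<tau>: "\<tau> \<in> {0..T}" for \<tau>
    using optimality_system_rhs_diff_le[OF os os' b c \<gamma> U \<beta> \<tau> l[OF \<tau>] l'[OF \<tau>]] diff[OF \<tau>]
    unfolding defs L_def by blast+
  have "\<bar>s t - s' t\<bar> = \<bar>(LBINT \<tau>=0..t. fs \<tau>) - (LBINT \<tau>=0..t. fs' \<tau>)\<bar>"
    "\<bar>r t - r' t\<bar> = \<bar>(LBINT \<tau>=0..t. fr \<tau>) - (LBINT \<tau>=0..t. fr' \<tau>)\<bar>"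
    "\<bar>ls t - ls' t\<bar> = \<bar>(LBINT \<tau>=t..T. fl \<tau>) - (LBINT \<tau>=t..T. fl' \<tau>)\<bar>"
    "\<bar>lr t - lr' t\<bar> = \<bar>(LBINT \<tau>=t..T. fm \<tau>) - (LBINT \<tau>=t..T. fm' \<tau>)\<bar>"
    using os os' t unfolding optimality_system_def defs by (auto simp: abs_minus_commute)
  moreover have "\<bar>(LBINT \<tau>=0..t. fs \<tau>) - (LBINT \<tau>=0..t. fs' \<tau>)\<bar> \<le> L * \<delta> * (T - 0)"
    "\<bar>(LBINT \<tau>=0..t. fr \<tau>) - (LBINT \<tau>=0..t. fr' \<tau>)\<bar> \<le> L * \<delta> * (T - 0)"
    using abs_interval_integral_diff_le[OF int(1,2), of "L * \<delta>" 0 t]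
      abs_interval_integral_diff_le[OF int(3,4), of "L * \<delta>" 0 t]
      rhs t by (simp_all add: zero_ereal_def)
  moreover have "\<bar>(LBINT \<tau>=t..T. fl \<tau>) - (LBINT \<tau>=t..T. fl' \<tau>)\<bar> \<le> L * \<delta> * (T - 0)"
    "\<bar>(LBINT \<tau>=t..T. fm \<tau>) - (LBINT \<tau>=t..T. fm' \<tau>)\<bar> \<le> L * \<delta> * (T - 0)"
    using abs_interval_integral_diff_le[OF int(5,6), of "L * \<delta>" t T]
      abs_interval_integral_diff_le[OF int(7,8), of "L * \<delta>" t T]
      rhs t by simp_all
  ultimately show ?thesis
    by simp
qed

lemma optimality_system_unique:
  fixes \<beta> :: "real \<Rightarrow> real"
  assumes os: "optimality_system \<beta> \<gamma> b c u1max u2max i0 T s r ls lr u1 u2"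
    and os': "optimality_system \<beta> \<gamma> b c u1max u2max i0 T s' r' ls' lr' u1' u2'"
    and b: "0 < b" and c: "0 < c" and \<gamma>: "0 \<le> \<gamma>" and U: "0 \<le> u1max" "0 \<le> u2max"
    and \<beta>: "\<And>\<tau>. \<beta> \<tau> \<in> {0..B}"
    and small_K: "T * (3 * B + u1max + 3 * u2max + \<gamma>) \<le> 1 / 4"
    and small_L: "T * ((8 * (B + u1max + u2max + 1) + 2 * \<gamma>) * (1 + 3 / (2 * b) + 6 / c)) < 1"
    and t: "t \<in> {0..T}"
  shows "s t = s' t \<and> r t = r' t \<and> ls t = ls' t \<and> lr t = lr' t \<and> u1 t = u1' t \<and> u2 t = u2' t"
proof -
  define L where "L = (8 * (B + u1max + u2max + 1) + 2 * \<gamma>) * (1 + 3 / (2 * b) + 6 / c)"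
  define e where "e \<tau> = max (max \<bar>s \<tau> - s' \<tau>\<bar> \<bar>r \<tau> - r' \<tau>\<bar>) (max \<bar>ls \<tau> - ls' \<tau>\<bar> \<bar>lr \<tau> - lr' \<tau>\<bar>)"
    for \<tau>
  define M where "M = (SUP \<tau>\<in>{0..T}. e \<tau>)"
  note adj = optimality_system_adjoint_le_2[OF os \<gamma> U \<beta> small_K]
  note adj' = optimality_system_adjoint_le_2[OF os' \<gamma> U \<beta> small_K]
  have bdd: "bdd_above (e ` {0..T})"
  proof (rule bdd_aboveI2)
    fix \<tau> assume \<tau>: "\<tau> \<in> {0..T}"
    note bounds = optimality_system_bounds[OF os U \<tau>] optimality_system_bounds[OF os' U \<tau>]
    have "\<bar>s \<tau> - s' \<tau>\<bar> \<le> 4" "\<bar>r \<tau> - r' \<tau>\<bar> \<le> 4"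
      using bounds(1,2,5,6) by (auto simp: abs_le_iff)
    moreover have "\<bar>ls \<tau> - ls' \<tau>\<bar> \<le> 4" "\<bar>lr \<tau> - lr' \<tau>\<bar> \<le> 4"
      using adj[OF \<tau>] adj'[OF \<tau>] by linarith+
    ultimately show "e \<tau> \<le> 4"
      unfolding e_def by simp
  qed
  have "e \<tau> \<le> 0 + (T * L) * M" if \<tau>: "\<tau> \<in> {0..T}" for \<tau>
  proof -
    have "\<bar>s \<sigma> - s' \<sigma>\<bar> \<le> M \<and> \<bar>r \<sigma> - r' \<sigma>\<bar> \<le> M \<and> \<bar>ls \<sigma> - ls' \<sigma>\<bar> \<le> M \<and> \<bar>lr \<sigma> - lr' \<sigma>\<bar> \<le> M"
      if "\<sigma> \<in> {0..T}" for \<sigma>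
      using cSUP_upper[OF that bdd] unfolding M_def e_def by simp
    from optimality_system_diff_le[OF os os' b c \<gamma> U \<beta> _ _ this \<tau>] adj adj'
    have "e \<tau> \<le> L * M * T"
      unfolding e_def L_def by simp
    then show ?thesis
      by (simp add: mult.commute mult.left_commute)
  qed
  then have "e t \<le> 0 / (1 - T * L)"
    using bdd small_L t unfolding M_def L_def by (intro le_of_self_bounded_SUP) auto
  then have "s t = s' t" "r t = r' t" "ls t = ls' t" "lr t = lr' t"
    unfolding e_def by simp_all
  moreover from this have "u1 t = u1' t" "u2 t = u2' t"
    unfolding optimality_system_controls[OF os t] optimality_system_controls[OF os' t] by simp_all
  ultimately show ?thesis
    by simp
qed

theorem theorem4:
  fixes \<beta> :: "real \<Rightarrow> real" and \<gamma> b c u1max u2max i0 :: real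
  assumes "\<gamma> > 0" and "b > 0" and "c > 0" and "u1max > 0" and "u2max > 0"
    and "0 \<le> i0" and "i0 \<le> 1"
    and "\<beta> \<in> borel_measurable borel"
    and "\<exists>B. \<forall>t. 0 \<le> \<beta> t \<and> \<beta> t \<le> B"
  shows "\<exists>T0>0. \<forall>T. 0 < T \<and> T < T0 \<longrightarrow>
           (\<forall>s r ls lr u1 u2 s' r' ls' lr' u1' u2'.
              optimality_system \<beta> \<gamma> b c u1max u2max i0 T s r ls lr u1 u2 \<longrightarrow>
              optimality_system \<beta> \<gamma> b c u1max u2max i0 T s' r' ls' lr' u1' u2' \<longrightarrow>
              (\<forall>t\<in>{0..T}. s t = s' t \<and> r t = r' t \<and> ls t = ls' t \<and> lr t = lr' t
                          \<and> u1 t = u1' t \<and> u2 t = u2' t))"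
proof -
  obtain B where \<beta>: "\<And>\<tau>. \<beta> \<tau> \<in> {0..B}"
    using assms(9) by auto
  define K where "K = 3 * B + u1max + 3 * u2max + \<gamma>"
  define L where "L = (8 * (B + u1max + u2max + 1) + 2 * \<gamma>) * (1 + 3 / (2 * b) + 6 / c)"
  define T0 where "T0 = 1 / (4 * K + L + 1)"
  have "0 \<le> B"
    using \<beta>[of 0] by simp
  then have K: "0 \<le> K" and L: "0 \<le> L"
    unfolding K_def L_def using assms(1-5) by simp_all
  then have "0 < T0"
    unfolding T0_def by simp
  moreover have "s t = s' t \<and> r t = r' t \<and> ls t = ls' t \<and> lr t = lr' t
      \<and> u1 t = u1' t \<and> u2 t = u2' t"
    if T: "0 < T \<and> T < T0"
      and os: "optimality_system \<beta> \<gamma> b c u1max u2max i0 T s r ls lr u1 u2"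
      and os': "optimality_system \<beta> \<gamma> b c u1max u2max i0 T s' r' ls' lr' u1' u2'"
      and t: "t \<in> {0..T}"
    for T s r ls lr u1 u2 s' r' ls' lr' u1' u2' t
  proof -
    have "4 * (T * K) + T * L + T < 1"
      using T K L unfolding T0_def by (simp add: field_simps)
    moreover have "0 \<le> T * K" "0 \<le> T * L"
      using T K L by simp_all
    ultimately have "T * K \<le> 1 / 4" "T * L < 1"
      using T by linarith+
    then show ?thesis
      using optimality_system_unique[OF os os' _ _ _ _ _ \<beta> _ _ t] assms(1-5)
      unfolding K_def L_def by simp
  qed
  ultimately show ?thesis
    by blast
qed

end
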